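(* Let $\mathcal{S}_{\textsf{EVSP}}$ denote an optimal solution for $\mathcal{I}_{\textsf{EVSP}} = f(\mathcal{I}_{\textsf{BPP}})$. If a solution $\mathcal{S}_{\textsf{BPP}}$ for $\mathcal{I}_{\textsf{BPP}}$ is constructed from $\mathcal{S}_{\textsf{EVSP}}$ by packing, for each vehicle used to serve item customers, all items associated with the item customers served by that vehicle into a single bin, and packing each item associated with an unserved item customer (if any) into its own bin, then $\mathcal{S}_{\textsf{BPP}}$ is an optimal solution for $\mathcal{I}_{\textsf{BPP}}$.
   Context: The electric vehicle sharing problem (EVSP): there is a set of stations, each with a capacity (number of parking spaces) and a number of charging facilities; a fleet of identical electric vehicles with battery capacity $\textsf{L}$ initially located at stations; and a set of customers, each with a set of driving demands $(s^{\text{out}}, t_i, s^{\text{in}}, t_j, \varepsilon)$ (pick-up station, departure time, drop-off station, arrival time, required energy). A demand is fulfilled by a vehicle if the vehicle is at the pick-up station at time $t_i$, its battery energy is at least $\varepsilon$, and there is a free parking space at the drop-off station; the vehicle's energy decreases by $\varepsilon$ and increases only by charging at a charging facility. A customer is served iff all its demands are fulfilled; the objective is to maximize the total rental time $\sum (t_j - t_i)$ over demands of served customers. The one-dimensional bin packing problem (BPP): given items $\mathcal{N} = \{1,\dots,n\}$ with sizes $\ell_i \in (0,1]$, find a partition $\{\mathcal{N}_1,\dots,\mathcal{N}_k\}$ of $\mathcal{N}$ such that the sizes in each part sum to at most $1$ and $k$ (the number of bins) is minimized. The reduction $f$ maps a BPP instance $\mathcal{I}_{\textsf{BPP}}$ to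 the EVSP instance $\mathcal{I}_{\textsf{EVSP}}$ with $2n$ customers, each having a single demand: there is a single station $s$ with capacity $n$ and no charging facilities; there are $n$ fully charged vehicles initially at $s$, each with battery capacity $\textsf{L} = 1$; for each item $i \in \mathcal{N}$ there is an item customer with the single demand $(s, 2i, s, 2i+1, \ell_i)$; and there are $n$ dummy customers, each with the single demand $(s, 1, s, 2, \textsf{L})$. Each customer contributes rental time $1$ to the objective, so maximizing total rental time is equivalent to maximizing the number of served customers. *)

theory Defs
  imports Complex_Main "HOL-Library.Disjoint_Sets"
begin

definition bpp_feasible :: "nat \<Rightarrow> (nat \<Rightarrow> real) \<Rightarrow> nat set set \<Rightarrow> bool" where
  "bpp_feasible n l P \<longleftrightarrow> partition_on {1..n} P \<and> (\<forall>B\<in>P. (\<Sum>i\<in>B. l i) \<le> 1)"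

definition bpp_optimal :: "nat \<Rightarrow> (nat \<Rightarrow> real) \<Rightarrow> nat set set \<Rightarrow> bool" where
  "bpp_optimal n l P \<longleftrightarrow> bpp_feasible n l P \<and>
     (\<forall>Q. bpp_feasible n l Q \<longrightarrow> card P \<le> card Q)"

text \<open>A driving demand: pick-up station, departure time, drop-off station, arrival time,
  required energy.\<close>
record demand =
  pu :: nat
  td :: nat
  dof :: nat
  ta :: nat
  en :: real

text \<open>An EVSP instance without charging facilities; customers of type 'c, vehicles and
  stations are natural numbers. Vehicles start fully charged (energy = batt).\<close>
record 'c evsp =
  stns :: "nat set"
  cap :: "nat \<Rightarrow> nat"
  vehs :: "nat set"
  loc0 :: "nat \<Rightarrow> nat"
  batt :: real
  custs :: "'c set"
  dems :: "'c \<Rightarrow> demand list"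

text \<open>A solution: a set of served customers and an assignment of each demand (c, k)
  (the k-th demand of customer c) to a vehicle.\<close>

definition dem_of :: "'c evsp \<Rightarrow> 'c \<times> nat \<Rightarrow> demand" where
  "dem_of I x = dems I (fst x) ! snd x"

definition trips :: "'c evsp \<Rightarrow> 'c set \<Rightarrow> ('c \<Rightarrow> nat \<Rightarrow> nat) \<Rightarrow> nat \<Rightarrow> ('c \<times> nat) set" where
  "trips I S a v = {(c, k). c \<in> S \<and> k < length (dems I c) \<and> a c k = v}"

definition loc_at :: "'c evsp \<Rightarrow> ('c \<times> nat) set \<Rightarrow> nat \<Rightarrow> nat \<Rightarrow> nat" where
  "loc_at I T v t =
     (if \<exists>y\<in>T. ta (dem_of I y) \<le> t
      then dof (dem_of I (ARG_MAX (\<lambda>y. ta (dem_of I y)) y. y \<in> T \<and> ta (dem_of I y) \<le> t))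
      else loc0 I v)"

text \<open>Vehicle v with trip set T is parked at station s at time t: it is not driving
  (a vehicle departing at t has left, a vehicle arriving at t is parked) and its location is s.\<close>
definition parked :: "'c evsp \<Rightarrow> ('c \<times> nat) set \<Rightarrow> nat \<Rightarrow> nat \<Rightarrow> nat \<Rightarrow> bool" where
  "parked I T v s t \<longleftrightarrow>
     (\<not> (\<exists>y\<in>T. td (dem_of I y) \<le> t \<and> t < ta (dem_of I y))) \<and> loc_at I T v t = s"

definition evsp_feasible :: "'c evsp \<Rightarrow> 'c set \<Rightarrow> ('c \<Rightarrow> nat \<Rightarrow> nat) \<Rightarrow> bool" where
  "evsp_feasible I S a \<longleftrightarrow>
     S \<subseteq> custs I \<and>
     (\<forall>c\<in>S. \<forall>k < length (dems I c). a c k \<in> vehs I) \<and>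
     (\<forall>v\<in>vehs I. let T = trips I S a v in
        \<comment> \<open>the vehicle performs at most one trip at a time\<close>
        (\<forall>x\<in>T. \<forall>y\<in>T. x \<noteq> y \<longrightarrow>
            ta (dem_of I x) \<le> td (dem_of I y) \<or> ta (dem_of I y) \<le> td (dem_of I x)) \<and>
        \<comment> \<open>it is at the pick-up station at departure time\<close>
        (\<forall>x\<in>T. loc_at I T v (td (dem_of I x)) = pu (dem_of I x)) \<and>
        \<comment> \<open>its energy (no charging) suffices: initial energy minus energy of earlier trips\<close>
        (\<forall>x\<in>T. en (dem_of I x) \<le>
            batt I - (\<Sum>y\<in>{y\<in>T. ta (dem_of I y) \<le> td (dem_of I x)}. en (dem_of I y))) \<and>
        \<comment> \<open>a free parking space at the drop-off station at arrival time\<close>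
        (\<forall>x\<in>T. card {w\<in>vehs I. w \<noteq> v \<and>
              parked I (trips I S a w) w (dof (dem_of I x)) (ta (dem_of I x))}
            < cap I (dof (dem_of I x))))"

definition evsp_value :: "'c evsp \<Rightarrow> 'c set \<Rightarrow> nat" where
  "evsp_value I S = (\<Sum>c\<in>S. \<Sum>d\<leftarrow>dems I c. ta d - td d)"

definition evsp_optimal :: "'c evsp \<Rightarrow> 'c set \<Rightarrow> ('c \<Rightarrow> nat \<Rightarrow> nat) \<Rightarrow> bool" where
  "evsp_optimal I S a \<longleftrightarrow> evsp_feasible I S a \<and>
     (\<forall>S' a'. evsp_feasible I S' a' \<longrightarrow> evsp_value I S' \<le> evsp_value I S)"

datatype cust = Item nat | Dummy nat

definition reduction :: "nat \<Rightarrow> (nat \<Rightarrow> real) \<Rightarrow> cust evsp" where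
  "reduction n l =
     \<lparr> stns = {0}, cap = (\<lambda>_. n), vehs = {1..n}, loc0 = (\<lambda>_. 0), batt = 1,
       custs = Item ` {1..n} \<union> Dummy ` {1..n},
       dems = (\<lambda>c. case c of
                 Item i \<Rightarrow> [\<lparr>pu = 0, td = 2 * i, dof = 0, ta = 2 * i + 1, en = l i\<rparr>]
               | Dummy j \<Rightarrow> [\<lparr>pu = 0, td = 1, dof = 0, ta = 2, en = 1\<rparr>]) \<rparr>"

definition packing_from :: "nat \<Rightarrow> cust set \<Rightarrow> (cust \<Rightarrow> nat \<Rightarrow> nat) \<Rightarrow> nat set set" where
  "packing_from n S a =
     {{i \<in> {1..n}. Item i \<in> S \<and> a (Item i) 0 = v} | v.
         v \<in> {1..n} \<and> (\<exists>i\<in>{1..n}. Item i \<in> S \<and> a (Item i) 0 = v)}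
     \<union> {{i} | i. i \<in> {1..n} \<and> Item i \<notin> S}"

end

theory Submission
  imports Defs
begin

(* In the reduced instance a vehicle that serves a dummy customer can serve nothing else: two
   dummy demands overlap in time, and a dummy drains the whole battery before any item demand
   starts. A vehicle serving only item customers can serve exactly the sets of items of total
   size at most 1, in increasing order. Hence a packing into m bins gives a schedule serving all
   n item customers and n - m dummies, while the packing derived from a schedule serving s
   customers has at most 2n - s bins; optimality of the schedule thus forces optimality of the
   derived packing. *)

lemma card_others_less:
  assumes "finite A" "v \<in> A" "card A \<le> k"
  shows "card {w \<in> A. w \<noteq> v \<and> P w} < k"
proof -
  have "card {w \<in> A. w \<noteq> v \<and> P w} \<le> card (A - {v})"
    using assms(1) by (intro card_mono) auto
  also have "\<dots> < card A"
    using assms(1,2) by (rule card_Diff1_less)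
  finally show ?thesis using assms(3) by simp
qed

lemma card_partition_on_le:
  assumes P: "partition_on A P" and "finite A"
  shows "card P \<le> card A"
proof -
  have fin: "finite p" if "p \<in> P" for p
    using finite_subset[OF Union_upper[OF that]] partition_onD1[OF P] \<open>finite A\<close> by simp
  have "card P = (\<Sum>p\<in>P. 1)" by simp
  also have "\<dots> \<le> (\<Sum>p\<in>P. card p)"
  proof (rule sum_mono)
    fix p assume "p \<in> P"
    then show "1 \<le> card p"
      using fin partition_onD3[OF P] by (auto simp: Suc_le_eq card_gt_0_iff)
  qed
  also have "\<dots> = card A"
    using product_partition[OF P fin] by simp
  finally show ?thesis .
qed

lemma partition_on_enumerate:
  assumes P: "partition_on A P" and "finite A"
  obtains f where "\<forall>x\<in>A. f x \<in> {1..card P}" and "\<forall>v\<in>{1..card P}. {x \<in> A. f x = v} \<in> P"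
proof -
  let ?V = "{1..card P}"
  obtain g where g: "bij_betw g ?V P"
    using ex_bij_betw_nat_finite_1 finite_elements[OF \<open>finite A\<close> P] by blast
  then have gP: "g v \<in> P" if "v \<in> ?V" for v
    using that by (simp add: bij_betw_apply)
  have unique: "v = v'" if "v \<in> ?V" "v' \<in> ?V" "x \<in> g v" "x \<in> g v'" for x v v'
  proof -
    have "g v = g v'"
      using partition_onD2[OF P] gP[OF that(1)] gP[OF that(2)] that(3,4)
      by (meson disjnt_iff pairwiseD)
    then show ?thesis using bij_betw_imp_inj_on[OF g] that(1,2) by (simp add: inj_on_eq_iff)
  qed
  define f where "f x = (THE v. v \<in> ?V \<and> x \<in> g v)" for x
  have f: "f x \<in> ?V \<and> x \<in> g (f x)" if "x \<in> A" for x
  proof -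
    have "x \<in> \<Union>(g ` ?V)"
      using that partition_onD1[OF P] bij_betw_imp_surj_on[OF g] by simp
    then obtain v where v: "v \<in> ?V \<and> x \<in> g v" by blast
    have "f x = v"
      unfolding f_def using v unique by (intro the_equality) blast+
    with v show ?thesis by simp
  qed
  have blocks: "{x \<in> A. f x = v} = g v" if "v \<in> ?V" for v
  proof
    show "{x \<in> A. f x = v} \<subseteq> g v" using f by blast
    show "g v \<subseteq> {x \<in> A. f x = v}"
    proof
      fix x assume x: "x \<in> g v"
      then have "x \<in> A" using gP[OF that] partition_onD1[OF P] by blast
      then show "x \<in> {x \<in> A. f x = v}" using f unique that x by blast
    qed
  qed
  show ?thesis
  proof (rule that[of f])
    show "\<forall>x\<in>A. f x \<in> ?V" using f by blast
    show "\<forall>v\<in>?V. {x \<in> A. f x = v} \<in> P" using blocks gP by simp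
  qed
qed

fun reduction_demand :: "(nat \<Rightarrow> real) \<Rightarrow> cust \<Rightarrow> demand" where
  "reduction_demand l (Item i) = \<lparr>pu = 0, td = 2 * i, dof = 0, ta = 2 * i + 1, en = l i\<rparr>"
| "reduction_demand l (Dummy j) = \<lparr>pu = 0, td = 1, dof = 0, ta = 2, en = 1\<rparr>"

lemma reduction_demand_stations [simp]:
  "pu (reduction_demand l c) = 0" "dof (reduction_demand l c) = 0"
  by (cases c; simp)+

lemma reduction_simps [simp]:
  "stns (reduction n l) = {0}" "cap (reduction n l) s = n" "vehs (reduction n l) = {1..n}"
  "loc0 (reduction n l) v = 0" "batt (reduction n l) = 1"
  "custs (reduction n l) = Item ` {1..n} \<union> Dummy ` {1..n}"
  "dems (reduction n l) c = [reduction_demand l c]"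
  by (cases c; simp add: reduction_def)+

lemma dem_of_reduction [simp]: "dem_of (reduction n l) (c, 0) = reduction_demand l c"
  by (simp add: dem_of_def)

lemma trips_reduction: "trips (reduction n l) S a v = (\<lambda>c. (c, 0)) ` {c \<in> S. a c 0 = v}"
  by (auto simp: trips_def)

lemma loc_at_reduction: "loc_at (reduction n l) (trips (reduction n l) S a w) v t = 0"
proof (cases "\<exists>y\<in>trips (reduction n l) S a w. ta (dem_of (reduction n l) y) \<le> t")
  case True
  let ?D = "dem_of (reduction n l)"
  let ?P = "\<lambda>y. y \<in> trips (reduction n l) S a w \<and> ta (?D y) \<le> t"
  from True obtain y where "?P y" by blast
  moreover have "\<forall>y. ?P y \<longrightarrow> ta (?D y) < Suc t" by simp
  ultimately have "?P (ARG_MAX (\<lambda>y. ta (?D y)) y. ?P y)"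
    by (rule arg_max_natI)
  then show ?thesis
    using True unfolding loc_at_def by (auto simp: trips_reduction)
qed (simp add: loc_at_def)

lemma evsp_value_reduction: "evsp_value (reduction n l) S = card S"
proof -
  have "ta (reduction_demand l c) - td (reduction_demand l c) = 1" for c
    by (cases c) simp_all
  then show ?thesis by (simp add: evsp_value_def)
qed

lemma sum_trips_reduction:
  "(\<Sum>y\<in>{y \<in> trips (reduction n l) S a v. Q y}. f y) =
     (\<Sum>c\<in>{c \<in> S. a c 0 = v \<and> Q (c, 0)}. f (c, 0))"
proof -
  have "{y \<in> trips (reduction n l) S a v. Q y} = (\<lambda>c. (c, 0)) ` {c \<in> S. a c 0 = v \<and> Q (c, 0)}"
    by (auto simp: trips_reduction)
  then show ?thesis by (simp add: sum.reindex inj_on_def)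
qed

(* The conditions of evsp_feasible for one vehicle serving the customers C of the reduced
   instance. The location and parking conditions are omitted: there is a single station, and its
   n spaces always leave room for an arriving vehicle. *)
definition schedulable :: "(nat \<Rightarrow> real) \<Rightarrow> cust set \<Rightarrow> bool" where
  "schedulable l C \<longleftrightarrow>
     (\<forall>c\<in>C. \<forall>c'\<in>C. c \<noteq> c' \<longrightarrow>
        ta (reduction_demand l c) \<le> td (reduction_demand l c') \<or>
        ta (reduction_demand l c') \<le> td (reduction_demand l c)) \<and>
     (\<forall>c\<in>C. en (reduction_demand l c) \<le>
        1 - (\<Sum>c'\<in>{c' \<in> C. ta (reduction_demand l c') \<le> td (reduction_demand l c)}.
               en (reduction_demand l c')))"

lemma evsp_feasible_reduction_iff:
  "evsp_feasible (reduction n l) S a \<longleftrightarrow>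
     S \<subseteq> custs (reduction n l) \<and> (\<forall>c\<in>S. a c 0 \<in> {1..n}) \<and>
     (\<forall>v\<in>{1..n}. schedulable l {c \<in> S. a c 0 = v})"
  unfolding evsp_feasible_def schedulable_def Let_def loc_at_reduction sum_trips_reduction
  by (simp add: trips_reduction card_others_less cong: ball_cong del: atLeastAtMost_iff)

lemma en_reduction_demand_nonneg:
  "c \<in> custs (reduction n l) \<Longrightarrow> \<forall>i\<in>{1..n}. 0 < l i \<Longrightarrow> 0 \<le> en (reduction_demand l c)"
  by (auto intro: less_imp_le)

lemma sum_en_Item: "(\<Sum>c\<in>Item ` X. en (reduction_demand l c)) = (\<Sum>i\<in>X. l i)"
  by (simp add: sum.reindex inj_on_def)

lemma schedulable_Dummy_alone:
  assumes sched: "schedulable l C" and C: "C \<subseteq> custs (reduction n l)"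
    and pos: "\<forall>i\<in>{1..n}. 0 < l i" and j: "Dummy j \<in> C"
  shows "C = {Dummy j}"
proof (rule ccontr)
  assume "C \<noteq> {Dummy j}"
  with j obtain c where c: "c \<in> C" "c \<noteq> Dummy j" by blast
  show False
  proof (cases c)
    case (Dummy j')
    then show False
      using sched c j unfolding schedulable_def by fastforce
  next
    case (Item i)
    let ?D = "reduction_demand l"
    let ?P = "{c' \<in> C. ta (?D c') \<le> td (?D c)}"
    have i: "i \<in> {1..n}" using C c Item by auto
    have fin: "finite C" using finite_subset[OF C] by simp
    have "1 \<le> (\<Sum>c'\<in>?P. en (?D c'))"
    proof -
      have "en (?D (Dummy j)) \<le> (\<Sum>c'\<in>?P. en (?D c'))"
        using fin j i Item C en_reduction_demand_nonneg[OF _ pos]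
        by (intro member_le_sum) auto
      then show ?thesis by simp
    qed
    moreover have "l i \<le> 1 - (\<Sum>c'\<in>?P. en (?D c'))"
      using sched c Item unfolding schedulable_def by auto
    ultimately show False using pos i by fastforce
  qed
qed

lemma schedulable_load_le_1:
  assumes sched: "schedulable l C" and C: "C \<subseteq> custs (reduction n l)"
    and pos: "\<forall>i\<in>{1..n}. 0 < l i"
  shows "(\<Sum>i\<in>{i. Item i \<in> C}. l i) \<le> 1"
proof (cases "{i. Item i \<in> C} = {}")
  case False
  let ?D = "reduction_demand l"
  let ?I = "{i. Item i \<in> C}"
  define m where "m = Max ?I"
  let ?P = "{c \<in> C. ta (?D c) \<le> td (?D (Item m))}"
  have finC: "finite C" using finite_subset[OF C] by simp
  have "?I \<subseteq> {1..n}" using C by auto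
  then have finI: "finite ?I" using finite_subset by blast
  have m: "m \<in> ?I" using Max_in[OF finI False] by (simp add: m_def)
  \<comment> \<open>the energy condition for the last item served accounts for all the others\<close>
  have "Item ` (?I - {m}) \<subseteq> ?P"
  proof
    fix c assume "c \<in> Item ` (?I - {m})"
    then obtain i where "c = Item i" "i \<in> ?I" "i \<noteq> m" by blast
    moreover have "i \<le> m" using Max_ge[OF finI \<open>i \<in> ?I\<close>] by (simp add: m_def)
    ultimately show "c \<in> ?P" by simp
  qed
  then have "(\<Sum>i\<in>?I - {m}. l i) \<le> (\<Sum>c\<in>?P. en (?D c))"
    unfolding sum_en_Item[symmetric] using finC C en_reduction_demand_nonneg[OF _ pos]
    by (intro sum_mono2) auto
  moreover have "l m \<le> 1 - (\<Sum>c\<in>?P. en (?D c))"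
    using sched m unfolding schedulable_def by auto
  ultimately show ?thesis
    using sum.remove[OF finI m, of l] by simp
qed simp

lemma schedulableI:
  assumes C: "C \<subseteq> custs (reduction n l)" and pos: "\<forall>i\<in>{1..n}. 0 < l i"
    and alone: "\<forall>j. Dummy j \<in> C \<longrightarrow> C = {Dummy j}"
    and load: "(\<Sum>i\<in>{i. Item i \<in> C}. l i) \<le> 1"
  shows "schedulable l C"
  unfolding schedulable_def
proof (intro conjI ballI impI)
  fix c c' assume cc': "c \<in> C" "c' \<in> C" "c \<noteq> c'"
  then obtain i i' where "c = Item i" "c' = Item i'"
    using alone by (cases c; cases c') auto
  then show "ta (reduction_demand l c) \<le> td (reduction_demand l c') \<or>
      ta (reduction_demand l c') \<le> td (reduction_demand l c)"
    using cc'(3) by auto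
next
  let ?D = "reduction_demand l"
  let ?I = "{i. Item i \<in> C}"
  fix c assume c: "c \<in> C"
  let ?P = "{c' \<in> C. ta (?D c') \<le> td (?D c)}"
  show "en (?D c) \<le> 1 - (\<Sum>c'\<in>?P. en (?D c'))"
  proof (cases c)
    case (Dummy j)
    then have "C = {Dummy j}" using alone c by blast
    then have "?P = {}" using Dummy by simp
    then show ?thesis using Dummy by (simp only:) simp
  next
    case (Item i)
    have I: "?I \<subseteq> {1..n}" using C by auto
    then have finI: "finite ?I" using finite_subset by blast
    have i: "i \<in> ?I" using c Item by simp
    have no_Dummy: "Dummy j \<notin> C" for j
      using alone c Item by (metis cust.distinct(1) singletonD)
    have "?P \<subseteq> Item ` (?I - {i})"
    proof
      fix c' assume c': "c' \<in> ?P"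
      then obtain i' where "c' = Item i'"
        using no_Dummy c' by (cases c') auto
      then show "c' \<in> Item ` (?I - {i})" using c' Item by auto
    qed
    moreover have "0 \<le> l i'" if "i' \<in> ?I - {i}" for i'
      using that I pos by (auto intro: less_imp_le)
    ultimately have "(\<Sum>c'\<in>?P. en (?D c')) \<le> (\<Sum>i'\<in>?I - {i}. l i')"
      unfolding sum_en_Item[symmetric] using finI by (intro sum_mono2) auto
    then show ?thesis
      using load sum.remove[OF finI i, of l] Item by simp
  qed
qed

lemma evsp_feasible_of_packing:
  assumes pos: "\<forall>i\<in>{1..n}. 0 < l i" and Q: "bpp_feasible n l Q"
  obtains S' a' where "evsp_feasible (reduction n l) S' a'" and "card S' + card Q = 2 * n"
proof -
  let ?I = "reduction n l"
  define m where "m = card Q"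
  have part: "partition_on {1..n} Q" and load: "\<forall>B\<in>Q. (\<Sum>i\<in>B. l i) \<le> 1"
    using Q by (simp_all add: bpp_feasible_def)
  have "m \<le> n" using card_partition_on_le[OF part] by (simp add: m_def)
  obtain f where f: "\<forall>i\<in>{1..n}. f i \<in> {1..m}"
    and bins: "\<forall>v\<in>{1..m}. {i \<in> {1..n}. f i = v} \<in> Q"
    using partition_on_enumerate[OF part] by (auto simp: m_def)
  define S' where "S' = Item ` {1..n} \<union> Dummy ` {m<..n}"
  define a' :: "cust \<Rightarrow> nat \<Rightarrow> nat" where
    "a' c k = (case c of Item i \<Rightarrow> f i | Dummy j \<Rightarrow> j)" for c k
  have S': "S' \<subseteq> custs ?I" by (auto simp: S'_def)
  have served: "{c \<in> S'. a' c 0 = v} =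
      (if v \<le> m then Item ` {i \<in> {1..n}. f i = v} else {Dummy v})" if "v \<in> {1..n}" for v
    using f that by (auto simp: S'_def a'_def)
  have "schedulable l {c \<in> S'. a' c 0 = v}" if v: "v \<in> {1..n}" for v
  proof (rule schedulableI[OF _ pos])
    show "{c \<in> S'. a' c 0 = v} \<subseteq> custs ?I" using S' by blast
    show "\<forall>j. Dummy j \<in> {c \<in> S'. a' c 0 = v} \<longrightarrow> {c \<in> S'. a' c 0 = v} = {Dummy j}"
      unfolding served[OF v] by auto
    show "(\<Sum>i\<in>{i. Item i \<in> {c \<in> S'. a' c 0 = v}}. l i) \<le> 1"
      unfolding served[OF v] using bins load v by (auto simp: image_iff)
  qed
  moreover have "\<forall>c\<in>S'. a' c 0 \<in> {1..n}"
    using f \<open>m \<le> n\<close> by (auto simp: S'_def a'_def)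
  ultimately have "evsp_feasible ?I S' a'"
    using S' by (simp add: evsp_feasible_reduction_iff)
  moreover have "card S' = n + (n - m)"
    unfolding S'_def by (subst card_Un_disjoint) (auto simp: card_image inj_on_def)
  ultimately show ?thesis
    using that \<open>m \<le> n\<close> by (simp add: m_def)
qed

definition vehicle_bin :: "nat \<Rightarrow> cust set \<Rightarrow> (cust \<Rightarrow> nat \<Rightarrow> nat) \<Rightarrow> nat \<Rightarrow> nat set" where
  "vehicle_bin n S a v = {i \<in> {1..n}. Item i \<in> S \<and> a (Item i) 0 = v}"

lemma packing_from_eq:
  "packing_from n S a =
     vehicle_bin n S a ` {v \<in> {1..n}. vehicle_bin n S a v \<noteq> {}} \<union>
     (\<lambda>i. {i}) ` {i \<in> {1..n}. Item i \<notin> S}"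
  unfolding packing_from_def vehicle_bin_def by blast

lemma packing_from_block:
  assumes "X \<in> packing_from n S a" and "i \<in> X"
  shows "X = (if Item i \<in> S then vehicle_bin n S a (a (Item i) 0) else {i})"
  using assms unfolding packing_from_eq by (auto simp: vehicle_bin_def)

lemma partition_on_packing_from:
  assumes "\<forall>i\<in>{1..n}. Item i \<in> S \<longrightarrow> a (Item i) 0 \<in> {1..n}"
  shows "partition_on {1..n} (packing_from n S a)"
proof (rule partition_onI)
  show "\<Union>(packing_from n S a) = {1..n}"
  proof
    show "\<Union>(packing_from n S a) \<subseteq> {1..n}"
      unfolding packing_from_eq by (auto simp: vehicle_bin_def)
    show "{1..n} \<subseteq> \<Union>(packing_from n S a)"
      using assms unfolding packing_from_eq by (auto simp: vehicle_bin_def)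
  qed
  show "disjnt X Y" if "X \<in> packing_from n S a" "Y \<in> packing_from n S a" "X \<noteq> Y" for X Y
    using packing_from_block[OF that(1)] packing_from_block[OF that(2)] that(3)
    by (auto simp: disjnt_def)
  show "{} \<notin> packing_from n S a"
    unfolding packing_from_eq by auto
qed

lemma vehicle_bin_load_le_1:
  assumes pos: "\<forall>i\<in>{1..n}. 0 < l i" and feas: "evsp_feasible (reduction n l) S a"
    and v: "v \<in> {1..n}"
  shows "(\<Sum>i\<in>vehicle_bin n S a v. l i) \<le> 1"
proof -
  have S: "S \<subseteq> custs (reduction n l)" and "schedulable l {c \<in> S. a c 0 = v}"
    using feas v by (simp_all add: evsp_feasible_reduction_iff)
  then have "(\<Sum>i\<in>{i. Item i \<in> {c \<in> S. a c 0 = v}}. l i) \<le> 1"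
    using pos by (intro schedulable_load_le_1[where n = n]) auto
  moreover have "{i. Item i \<in> {c \<in> S. a c 0 = v}} = vehicle_bin n S a v"
    using S by (auto simp: vehicle_bin_def)
  ultimately show ?thesis by simp
qed

lemma bpp_feasible_packing_from:
  assumes sizes: "\<forall>i\<in>{1..n}. 0 < l i \<and> l i \<le> 1" and feas: "evsp_feasible (reduction n l) S a"
  shows "bpp_feasible n l (packing_from n S a)"
  unfolding bpp_feasible_def
proof
  show "partition_on {1..n} (packing_from n S a)"
    using feas by (intro partition_on_packing_from) (simp add: evsp_feasible_reduction_iff)
  show "\<forall>B\<in>packing_from n S a. (\<Sum>i\<in>B. l i) \<le> 1"
    using sizes vehicle_bin_load_le_1[OF _ feas] unfolding packing_from_eq by auto
qed

lemma Dummy_vehicle_exclusive: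
  assumes pos: "\<forall>i\<in>{1..n}. 0 < l i" and feas: "evsp_feasible (reduction n l) S a"
    and j: "Dummy j \<in> S" and c: "c \<in> S" "a c 0 = a (Dummy j) 0"
  shows "c = Dummy j"
proof -
  let ?C = "{c \<in> S. a c 0 = a (Dummy j) 0}"
  have "S \<subseteq> custs (reduction n l)" and "schedulable l ?C"
    using feas j by (simp_all add: evsp_feasible_reduction_iff)
  then have "?C = {Dummy j}"
    using pos j by (intro schedulable_Dummy_alone[where n = n]) auto
  then show ?thesis using c by blast
qed

lemma card_packing_from_le_vehicles:
  "card (packing_from n S a) \<le>
     card ((\<lambda>i. a (Item i) 0) ` {i \<in> {1..n}. Item i \<in> S}) + card {i \<in> {1..n}. Item i \<notin> S}"
proof -
  let ?vehicles = "(\<lambda>i. a (Item i) 0) ` {i \<in> {1..n}. Item i \<in> S}"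
  let ?unserved = "{i \<in> {1..n}. Item i \<notin> S}"
  have "packing_from n S a \<subseteq> vehicle_bin n S a ` ?vehicles \<union> (\<lambda>i. {i}) ` ?unserved"
    unfolding packing_from_eq by (auto simp: vehicle_bin_def)
  then have "card (packing_from n S a) \<le>
      card (vehicle_bin n S a ` ?vehicles \<union> (\<lambda>i. {i}) ` ?unserved)"
    by (intro card_mono) auto
  also have "\<dots> \<le> card (vehicle_bin n S a ` ?vehicles) + card ((\<lambda>i. {i}) ` ?unserved)"
    by (rule card_Un_le)
  also have "\<dots> \<le> card ?vehicles + card ?unserved"
    by (intro add_mono card_image_le) auto
  finally show ?thesis .
qed

lemma card_item_vehicles_add_dummies_le:
  assumes pos: "\<forall>i\<in>{1..n}. 0 < l i" and feas: "evsp_feasible (reduction n l) S a"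
  shows "card ((\<lambda>i. a (Item i) 0) ` {i \<in> {1..n}. Item i \<in> S}) + card {j. Dummy j \<in> S} \<le> n"
proof -
  let ?item_vehicles = "(\<lambda>i. a (Item i) 0) ` {i \<in> {1..n}. Item i \<in> S}"
  let ?dummy_vehicles = "(\<lambda>j. a (Dummy j) 0) ` {j. Dummy j \<in> S}"
  have exclusive: "c = Dummy j" if "Dummy j \<in> S" "c \<in> S" "a c 0 = a (Dummy j) 0" for c j
    using Dummy_vehicle_exclusive[OF pos feas that] .
  have "inj_on (\<lambda>j. a (Dummy j) 0) {j. Dummy j \<in> S}"
    using exclusive by (auto simp: inj_on_def)
  then have "card {j. Dummy j \<in> S} = card ?dummy_vehicles"
    by (simp add: card_image)
  moreover have "?item_vehicles \<inter> ?dummy_vehicles = {}"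
    using exclusive by fastforce
  moreover have sub: "?item_vehicles \<union> ?dummy_vehicles \<subseteq> {1..n}"
    using feas by (auto simp: evsp_feasible_reduction_iff)
  then have "finite ?item_vehicles" "finite ?dummy_vehicles"
    using finite_subset[OF sub] by simp_all
  ultimately have
    "card ?item_vehicles + card {j. Dummy j \<in> S} = card (?item_vehicles \<union> ?dummy_vehicles)"
    by (simp add: card_Un_disjoint)
  also have "\<dots> \<le> n"
    using card_mono[OF _ sub] by simp
  finally show ?thesis .
qed

lemma card_reduction_customers:
  assumes S: "S \<subseteq> custs (reduction n l)"
  shows "card S = card {i \<in> {1..n}. Item i \<in> S} + card {j. Dummy j \<in> S}"
proof -
  have "{j. Dummy j \<in> S} \<subseteq> {1..n}"
    using S by auto
  then have "finite {j. Dummy j \<in> S}" by (rule finite_subset) simp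
  have "S = Item ` {i \<in> {1..n}. Item i \<in> S} \<union> Dummy ` {j. Dummy j \<in> S}"
    using S by auto
  also have "card \<dots> =
      card (Item ` {i \<in> {1..n}. Item i \<in> S}) + card (Dummy ` {j. Dummy j \<in> S})"
    using \<open>finite {j. Dummy j \<in> S}\<close> by (intro card_Un_disjoint) auto
  also have "\<dots> = card {i \<in> {1..n}. Item i \<in> S} + card {j. Dummy j \<in> S}"
    by (simp add: card_image inj_on_def)
  finally show ?thesis .
qed

lemma card_packing_from_le:
  assumes pos: "\<forall>i\<in>{1..n}. 0 < l i" and feas: "evsp_feasible (reduction n l) S a"
  shows "card (packing_from n S a) + card S \<le> 2 * n"
proof -
  have "card {i \<in> {1..n}. Item i \<in> S} + card {i \<in> {1..n}. Item i \<notin> S} = n"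
    using card_Int_Diff[of "{1..n}" "{i. Item i \<in> S}"] by (simp add: Int_def set_diff_eq)
  moreover have "card S = card {i \<in> {1..n}. Item i \<in> S} + card {j. Dummy j \<in> S}"
    using feas by (intro card_reduction_customers) (simp add: evsp_feasible_reduction_iff)
  ultimately show ?thesis
    using card_packing_from_le_vehicles[of n S a] card_item_vehicles_add_dummies_le[OF pos feas]
    by linarith
qed

theorem proposition7:
  fixes n :: nat and l :: "nat \<Rightarrow> real"
    and S :: "cust set" and a :: "cust \<Rightarrow> nat \<Rightarrow> nat"
  assumes sizes: "\<forall>i\<in>{1..n}. 0 < l i \<and> l i \<le> 1"
    and opt: "evsp_optimal (reduction n l) S a"
  shows "bpp_optimal n l (packing_from n S a)"
proof -
  have pos: "\<forall>i\<in>{1..n}. 0 < l i" using sizes by simp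
  have feas: "evsp_feasible (reduction n l) S a"
    and best: "\<And>S' a'. evsp_feasible (reduction n l) S' a' \<Longrightarrow> card S' \<le> card S"
    using opt by (auto simp: evsp_optimal_def evsp_value_reduction)
  show ?thesis
    unfolding bpp_optimal_def
  proof (intro conjI allI impI)
    show "bpp_feasible n l (packing_from n S a)"
      using sizes feas by (rule bpp_feasible_packing_from)
    fix Q assume "bpp_feasible n l Q"
    then obtain S' a' where "evsp_feasible (reduction n l) S' a'" and "card S' + card Q = 2 * n"
      using pos evsp_feasible_of_packing by blast
    then show "card (packing_from n S a) \<le> card Q"
      using best card_packing_from_le[OF pos feas] by fastforce
  qed
qed

end
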